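(* For every expression $e\in\mathrm{Exp}$, the set $\langle e\rangle_\partial$ of states reachable from $e$ in the derivative automaton $(\mathrm{Exp},\partial)$ is finite, and $|\langle e\rangle_\partial|\le \#(e)$, where $\#:\mathrm{Exp}\to\mathbb N$ is defined by $\#(b)=1$, $\#(v)=1$, $\#(p)=2$, $\#(e\oplus_{r,s}f)=\#(e)+\#(f)$, $\#(e+_bf)=\#(e)+\#(f)$, $\#(e;f)=\#(e)+\#(f)$, $\#(e^{(b)})=\#(e)$.
   Context: Fix a finite set $T$ of primitive tests, a set $\mathrm{Act}$ of atomic actions, a set $\mathrm{Out}$ of return values, and a semiring $(S,+,\cdot,0,1)$ that is positive ($x+y=0\Rightarrow x=y=0$), refinement (whenever $x+y=z+w$ there exist $s,t,u,v\in S$ with $s+t=x$, $s+u=z$, $u+v=y$, $t+v=w$) and Conway (equipped with an operation ${}^*:S\to S$ with $(a+b)^*=a^*(ba^* )^*$ and $(ab)^*=1+a(ba)^*b$ for all $a,b$). Tests: $b,c\in\mathrm{BExp}::=\mathtt{0}\mid\mathtt{1}\mid t\ (t\in T)\mid\bar b\mid b+c\mid bc$ (false, true, negation, disjunction, conjunction; $\mathtt 0,\mathtt 1$ are distinct from the semiring elements $0,1$). $\mathrm{At}$ is the finite set of atoms (minimal nonzero elements of the free Boolean algebra on $T$, i.e. of $\mathrm{BExp}$ modulo Boolean equivalence); atoms are also regarded as tests; $\alpha\le b$ means $\alpha$ entails $b$. Expressions: $e,f\in\mathrm{Exp}::= p\ (p\in\mathrm{Act})\mid b\ (b\in\mathrm{BExp})\mid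 e+_b f\mid e;f\mid e^{(b)}\mid v\ (v\in\mathrm{Out})\mid e\oplus_{r,s} f\ (r,s\in S)$ (if-then-else, sequencing, while loop, return, weighted choice). For a set $X$, $\mathcal M_\omega(X)$ is the set of finitely supported maps $X\to S$ with pointwise sum and scalar multiplication; $\delta_x$ sends $x$ to $1$ and all else to $0$. The derivative automaton has transition map $\partial:\mathrm{Exp}\to\mathcal M_\omega(\{\mathsf{acc},\mathsf{rej}\}+\mathrm{Out}+\mathrm{Act}\times\mathrm{Exp})^{\mathrm{At}}$, written $\partial(e)_\alpha$, defined by: $\partial(b)_\alpha=\delta_{\mathsf{acc}}$ if $\alpha\le b$ and $\delta_{\mathsf{rej}}$ otherwise; $\partial(v)_\alpha=\delta_v$; $\partial(p)_\alpha=\delta_{(p,\mathtt 1)}$; $\partial(e+_bf)_\alpha=\partial(e)_\alpha$ if $\alpha\le b$ and $\partial(f)_\alpha$ otherwise; $\partial(e\oplus_{r,s}f)_\alpha=r\,\partial(e)_\alpha+s\,\partial(f)_\alpha$; $\partial(e;f)_\alpha=\sum_x\partial(e)_\alpha(x)\,c_{\alpha,f}(x)$ where $c_{\alpha,f}(\mathsf{acc})=\partial(f)_\alpha$, $c_{\alpha,f}(x)=\delta_x$ for $x\in\{\mathsf{rej}\}\cup\mathrm{Out}$, $c_{\alpha,f}(p,e')=\delta_{(p,e';f)}$; and $\partial(e^{(b)})_\alpha(x)$ equals $1$ if $x=\mathsf{acc}$ and $\alpha\le\bar b$; $\partial(e)_\alpha(\mathsf{acc})^*\partial(e)_\alpha(x)$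 if $x\in\{\mathsf{rej}\}\cup\mathrm{Out}$ and $\alpha\le b$; $\partial(e)_\alpha(\mathsf{acc})^*\partial(e)_\alpha(p,e')$ if $x=(p,e';e^{(b)})$ and $\alpha\le b$; and $0$ otherwise. $\langle e\rangle_\partial$ is the smallest set containing $e$ and containing $g'$ whenever it contains $g$ and $\partial(g)_\alpha(p,g')\neq 0$ for some $\alpha,p$. *)

theory Defs
  imports Main
begin

definition positive_semiring :: "'w::semiring_1 itself \<Rightarrow> bool" where
  "positive_semiring _ \<longleftrightarrow> (\<forall>x y::'w. x + y = 0 \<longrightarrow> x = 0 \<and> y = 0)"

definition refinement_semiring :: "'w::semiring_1 itself \<Rightarrow> bool" where
  "refinement_semiring _ \<longleftrightarrow> (\<forall>x y z w::'w. x + y = z + w \<longrightarrow>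
     (\<exists>s t u v. s + t = x \<and> s + u = z \<and> u + v = y \<and> t + v = w))"

definition conway_star :: "('w::semiring_1 \<Rightarrow> 'w) \<Rightarrow> bool" where
  "conway_star st \<longleftrightarrow> (\<forall>a b. st (a + b) = st a * st (b * st a) \<and>
                                 st (a * b) = 1 + a * st (b * a) * b)"

datatype 't bexp = BFalse | BTrue | BPrim 't | BNot "'t bexp"
  | BOr "'t bexp" "'t bexp" | BAnd "'t bexp" "'t bexp"

text \<open>Atoms of the free Boolean algebra over the finite set of primitive tests are
  identified with truth assignments 't => bool; alpha entails b iff b holds under alpha.\<close>
type_synonym 't atom = "'t \<Rightarrow> bool"

fun entails :: "'t atom \<Rightarrow> 't bexp \<Rightarrow> bool" where
  "entails \<alpha> BFalse = False"
| "entails \<alpha> BTrue = True"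
| "entails \<alpha> (BPrim t) = \<alpha> t"
| "entails \<alpha> (BNot b) = (\<not> entails \<alpha> b)"
| "entails \<alpha> (BOr b c) = (entails \<alpha> b \<or> entails \<alpha> c)"
| "entails \<alpha> (BAnd b c) = (entails \<alpha> b \<and> entails \<alpha> c)"

datatype ('p, 't, 'v, 'w) exp =
    Act 'p
  | Test "'t bexp"
  | IfE "('p, 't, 'v, 'w) exp" "'t bexp" "('p, 't, 'v, 'w) exp"
  | Seq "('p, 't, 'v, 'w) exp" "('p, 't, 'v, 'w) exp"
  | While "('p, 't, 'v, 'w) exp" "'t bexp"
  | Ret 'v
  | Choice "('p, 't, 'v, 'w) exp" 'w 'w "('p, 't, 'v, 'w) exp"

datatype ('p, 'v, 'e) outcome = Acc | Rej | Out 'v | Tr 'p 'e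

text \<open>The derivative: elements of M_omega(X) are represented as functions X => S
  (they are always finitely supported). For sequencing, the sum over x of
  d(e)(x) * c(x) is written out pointwise.\<close>
fun deriv :: "('w::semiring_1 \<Rightarrow> 'w) \<Rightarrow> ('p, 't, 'v, 'w) exp \<Rightarrow> 't atom
              \<Rightarrow> ('p, 'v, ('p, 't, 'v, 'w) exp) outcome \<Rightarrow> 'w" where
  "deriv st (Test b) \<alpha> x = (if entails \<alpha> b then (if x = Acc then 1 else 0)
                                             else (if x = Rej then 1 else 0))"
| "deriv st (Ret v) \<alpha> x = (if x = Out v then 1 else 0)"
| "deriv st (Act p) \<alpha> x = (if x = Tr p (Test BTrue) then 1 else 0)"
| "deriv st (IfE e b f) \<alpha> x = (if entails \<alpha> b then deriv st e \<alpha> x else deriv st f \<alpha> x)"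
| "deriv st (Choice e r s f) \<alpha> x = r * deriv st e \<alpha> x + s * deriv st f \<alpha> x"
| "deriv st (Seq e f) \<alpha> x =
     deriv st e \<alpha> Acc * deriv st f \<alpha> x +
     (case x of
        Acc \<Rightarrow> 0
      | Rej \<Rightarrow> deriv st e \<alpha> Rej
      | Out v \<Rightarrow> deriv st e \<alpha> (Out v)
      | Tr p g \<Rightarrow> (case g of Seq e' f' \<Rightarrow> (if f' = f then deriv st e \<alpha> (Tr p e') else 0)
                           | _ \<Rightarrow> 0))"
| "deriv st (While e b) \<alpha> x =
     (case x of
        Acc \<Rightarrow> (if entails \<alpha> (BNot b) then 1 else 0)
      | Rej \<Rightarrow> (if entails \<alpha> b then st (deriv st e \<alpha> Acc) * deriv st e \<alpha> Rej else 0)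
      | Out v \<Rightarrow> (if entails \<alpha> b then st (deriv st e \<alpha> Acc) * deriv st e \<alpha> (Out v) else 0)
      | Tr p g \<Rightarrow> (if entails \<alpha> b then
                     (case g of Seq e' f' \<Rightarrow>
                        (if f' = While e b then st (deriv st e \<alpha> Acc) * deriv st e \<alpha> (Tr p e') else 0)
                      | _ \<Rightarrow> 0)
                   else 0))"

inductive_set reach :: "('w::semiring_1 \<Rightarrow> 'w) \<Rightarrow> ('p, 't, 'v, 'w) exp \<Rightarrow> ('p, 't, 'v, 'w) exp set"
  for st e where
  self: "e \<in> reach st e"
| step: "g \<in> reach st e \<Longrightarrow> deriv st g \<alpha> (Tr p g') \<noteq> 0 \<Longrightarrow> g' \<in> reach st e"

fun esize :: "('p, 't, 'v, 'w) exp \<Rightarrow> nat" where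
  "esize (Test b) = 1"
| "esize (Ret v) = 1"
| "esize (Act p) = 2"
| "esize (Choice e r s f) = esize e + esize f"
| "esize (IfE e b f) = esize e + esize f"
| "esize (Seq e f) = esize e + esize f"
| "esize (While e b) = esize e"

end

theory Submission
  imports Defs
begin

text \<open>Every state reachable from \<open>e\<close> other than \<open>e\<close> itself lies in the set \<open>derivs e\<close>
  of syntactic derivatives (in the style of Antimirov's partial derivatives), which
  contains every one-step successor of \<open>e\<close> and is closed under taking successors; by
  induction on \<open>e\<close> it has fewer than \<open>#(e)\<close> elements.\<close>

fun derivs :: "('p, 't, 'v, 'w) exp \<Rightarrow> ('p, 't, 'v, 'w) exp set" where
  "derivs (Test b) = {}"
| "derivs (Ret v) = {}"
| "derivs (Act p) = {Test BTrue}"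
| "derivs (Choice e r s f) = derivs e \<union> derivs f"
| "derivs (IfE e b f) = derivs e \<union> derivs f"
| "derivs (Seq e f) = (\<lambda>g. Seq g f) ` derivs e \<union> derivs f"
| "derivs (While e b) = (\<lambda>g. Seq g (While e b)) ` derivs e"

lemma finite_derivs: "finite (derivs e)"
  by (induction e) auto

lemma card_derivs_less_esize: "card (derivs e) < esize e"
proof (induction e)
  case (IfE e b f)
  then show ?case using card_Un_le[of "derivs e" "derivs f"] by simp
next
  case (Seq e f)
  then show ?case
    using card_Un_le[of "(\<lambda>g. Seq g f) ` derivs e" "derivs f"]
      card_image_le[OF finite_derivs, of "\<lambda>g. Seq g f" e] by simp
next
  case (While e b)
  then show ?case using card_image_le[OF finite_derivs, of "\<lambda>g. Seq g (While e b)" e] by simp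
next
  case (Choice e r s f)
  then show ?case using card_Un_le[of "derivs e" "derivs f"] by simp
qed auto

lemma deriv_Seq_Tr_nonzero:
  assumes "deriv st (Seq e f) \<alpha> (Tr p g) \<noteq> 0"
  shows "deriv st f \<alpha> (Tr p g) \<noteq> 0 \<or> (\<exists>g'. g = Seq g' f \<and> deriv st e \<alpha> (Tr p g') \<noteq> 0)"
  using assms by (auto split: exp.splits if_splits)

lemma deriv_While_Tr_nonzero:
  assumes "deriv st (While e b) \<alpha> (Tr p g) \<noteq> 0"
  shows "\<exists>g'. g = Seq g' (While e b) \<and> deriv st e \<alpha> (Tr p g') \<noteq> 0"
  using assms by (auto split: exp.splits if_splits)

lemma deriv_Tr_nonzero_in_derivs:
  "deriv st e \<alpha> (Tr p g) \<noteq> 0 \<Longrightarrow> g \<in> derivs e"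
proof (induction e arbitrary: g)
  case (Seq e f)
  then show ?case using deriv_Seq_Tr_nonzero[OF Seq.prems] by auto
next
  case (While e b)
  then show ?case using deriv_While_Tr_nonzero[OF While.prems] by auto
next
  case (Choice e r s f)
  then show ?case by (metis Un_iff add_0 deriv.simps(5) derivs.simps(4) mult_zero_right)
qed (auto split: if_splits)

lemma derivs_closed_under_deriv:
  "h \<in> derivs e \<Longrightarrow> deriv st h \<alpha> (Tr p g) \<noteq> 0 \<Longrightarrow> g \<in> derivs e"
proof (induction e arbitrary: h g)
  case (Seq e f)
  show ?case
  proof (cases "h \<in> derivs f")
    case True
    then show ?thesis using Seq.IH(2) Seq.prems(2) by simp
  next
    case False
    then obtain h' where h': "h' \<in> derivs e" "h = Seq h' f" using Seq.prems(1) by auto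
    then show ?thesis
      using deriv_Seq_Tr_nonzero[of st h' f \<alpha> p g] Seq.prems(2) Seq.IH(1)
        deriv_Tr_nonzero_in_derivs[of st f \<alpha> p g] by auto
  qed
next
  case (While e b)
  then obtain h' where h': "h' \<in> derivs e" "h = Seq h' (While e b)" by auto
  then show ?case
    using deriv_Seq_Tr_nonzero[of st h' "While e b" \<alpha> p g] While.prems(2) While.IH
      deriv_Tr_nonzero_in_derivs[of st "While e b" \<alpha> p g] by auto
qed auto

lemma reach_subset_derivs: "reach st e \<subseteq> insert e (derivs e)"
proof
  fix g assume "g \<in> reach st e"
  then show "g \<in> insert e (derivs e)"
    by induction (auto intro: deriv_Tr_nonzero_in_derivs derivs_closed_under_deriv)
qed

theorem mainTheorem1:
  fixes st :: "'w::semiring_1 \<Rightarrow> 'w"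
    and e :: "('p, 't::finite, 'v, 'w) exp"
  assumes "positive_semiring TYPE('w)"
    and "refinement_semiring TYPE('w)"
    and "conway_star st"
  shows "finite (reach st e) \<and> card (reach st e) \<le> esize e"
proof
  have finite_states: "finite (insert e (derivs e))"
    using finite_derivs by simp
  then show "finite (reach st e)"
    using reach_subset_derivs finite_subset by blast
  have "card (reach st e) \<le> card (insert e (derivs e))"
    using card_mono[OF finite_states reach_subset_derivs] .
  also have "\<dots> \<le> Suc (card (derivs e))"
    using finite_derivs[of e] by (simp add: card_insert_if)
  also have "\<dots> \<le> esize e"
    using card_derivs_less_esize by (simp add: Suc_le_eq)
  finally show "card (reach st e) \<le> esize e" .
qed

end
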